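(* If $Y_n\to Y$ in $\mathcal H=L^2(0,T;\mathcal K)$, then for each $t\in[0,T]$, $\pi^{Y_n}_t\to\pi^Y_t$ and $\rho^{Y_n}_t\to\rho^Y_t$ in total variation norm.
   Context: Setting: the signal $X(t)\in H$ ($H$ separable Hilbert space) on $(\Omega,\mathcal F,m)$ is the unique generalized solution of $dX=(AX+F(X))dt+B\,dW$ (with $A,F,B$ satisfying: for a reflexive Banach space $K$ densely and continuously embedded in $H$ and some $\eta$, $A+\eta I$, $F+\eta I$ $m$-dissipative on $H$ with $m$-dissipative parts in $K$, $K\subset D(F)$, $F$ maps bounded sets of $K$ to bounded sets of $H$, $W_A(t)=\int_0^tS(t-s)BdW(s)$ continuous in $H$, $D(F_K)$-valued, $\sup_{t\le T}(\|W_A\|_K+\|F_K(W_A)\|_K)<\infty$ a.s.). $\mathcal K$ is a separable Hilbert space and $\zeta:H\to\mathcal K$ measurable with $\int_0^T\|\zeta(X(t))\|^2_{\mathcal K}dt<\infty$ a.s. For an observation path $Y\in\mathcal H$: $\mathfrak C^Y_s(x)=(\zeta(x),Y(s))_{\mathcal K}-\frac12\|\zeta(x)\|^2_{\mathcal K}$, $\rho^Y_t(B)=E\big[1_B(X(t))\exp\int_0^t\mathfrak C^Y_s(X(s))ds\big]$ for Borel $B\subset H$, and $\pi^Y_t=\rho^Y_t/\rho^Y_t(H)$ (the white-noise nonlinear filter). *)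

theory Defs
  imports "HOL-Probability.Probability"
begin

definition frakC :: "('h \<Rightarrow> 'k::real_inner) \<Rightarrow> (real \<Rightarrow> 'k) \<Rightarrow> real \<Rightarrow> 'h \<Rightarrow> real" where
  "frakC \<zeta> Y s x = inner (\<zeta> x) (Y s) - (1/2) * (norm (\<zeta> x))\<^sup>2"

definition rho :: "'a measure \<Rightarrow> (real \<Rightarrow> 'a \<Rightarrow> 'h) \<Rightarrow> ('h \<Rightarrow> 'k::real_inner)
    \<Rightarrow> (real \<Rightarrow> 'k) \<Rightarrow> real \<Rightarrow> 'h set \<Rightarrow> real" where
  "rho M X \<zeta> Y t B = (\<integral>\<omega>. indicator B (X t \<omega>) *
       exp (LINT s:{0..t}|lborel. frakC \<zeta> Y s (X s \<omega>)) \<partial>M)"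

definition pi_filter :: "'a measure \<Rightarrow> (real \<Rightarrow> 'a \<Rightarrow> 'h) \<Rightarrow> ('h \<Rightarrow> 'k::real_inner)
    \<Rightarrow> (real \<Rightarrow> 'k) \<Rightarrow> real \<Rightarrow> 'h set \<Rightarrow> real" where
  "pi_filter M X \<zeta> Y t B = rho M X \<zeta> Y t B / rho M X \<zeta> Y t UNIV"

definition tv_norm :: "('h::topological_space set \<Rightarrow> real) \<Rightarrow> real" where
  "tv_norm \<mu> = (SUP P \<in> {P. finite P \<and> P \<subseteq> sets (borel :: 'h measure) \<and> disjoint P}.
                  \<Sum>A\<in>P. \<bar>\<mu> A\<bar>)"

end

theory Submission
  imports Defs
begin

text \<open>The filters are laws of \<open>X t\<close> weighted by the Kallianpur-Striebel factor
  \<open>w\<^sub>Y = exp (\<integral>\<^sub>0\<^sup>t C\<^sup>Y\<^sub>s (X s) ds)\<close>. Since \<open>C\<^sup>Y\<^sub>s x \<le> \<bar>Y s\<bar>\<^sup>2 / 2\<close>, these weights are bounded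
  uniformly along an \<open>L\<^sup>2\<close>-convergent sequence of observations, and on every path of finite energy
  \<open>\<integral>\<^sub>0\<^sup>T \<bar>\<zeta> (X s)\<bar>\<^sup>2 ds\<close> the exponent depends continuously on \<open>Y\<close> by the Cauchy-Schwarz (Young)
  inequality. Dominated convergence then gives \<open>w\<^sub>Y\<^sub>n \<rightarrow> w\<^sub>Y\<close> in \<open>L\<^sup>1(m)\<close>. The total variation of
  a difference of weighted laws is at most the \<open>L\<^sup>1\<close> distance of the weights, and normalising only
  adds the convergence of the total masses to the positive mass \<open>\<rho>\<^sup>Y\<^sub>t(H)\<close>.\<close>

lemma abs_inner_le_scaled_squares:
  fixes a b :: "'a::real_inner"
  assumes "0 < c"
  shows "\<bar>inner a b\<bar> \<le> c/2 * (norm a)\<^sup>2 + 1/(2*c) * (norm b)\<^sup>2"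
proof -
  have "2 * c * (norm a * norm b) \<le> c\<^sup>2 * (norm a)\<^sup>2 + (norm b)\<^sup>2"
    using zero_le_power2[of "c * norm a - norm b"] by (simp add: power2_eq_square algebra_simps)
  then have "norm a * norm b \<le> c/2 * (norm a)\<^sup>2 + 1/(2*c) * (norm b)\<^sup>2"
    using assms by (simp add: field_simps power2_eq_square)
  then show ?thesis
    using Cauchy_Schwarz_ineq2[of a b] by linarith
qed

lemma norm_diff_power2_le:
  fixes a b :: "'a::real_normed_vector"
  shows "(norm (a - b))\<^sup>2 \<le> 2 * (norm a)\<^sup>2 + 2 * (norm b)\<^sup>2"
proof -
  have "(norm (a - b))\<^sup>2 \<le> (norm a + norm b)\<^sup>2"
    by (simp add: power_mono norm_triangle_ineq4)
  also have "\<dots> \<le> 2 * (norm a)\<^sup>2 + 2 * (norm b)\<^sup>2"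
    using zero_le_power2[of "norm a - norm b"] by (simp add: power2_eq_square algebra_simps)
  finally show ?thesis .
qed

lemma set_integral_nonneg:
  fixes f :: "'b \<Rightarrow> real"
  assumes "\<And>x. x \<in> S \<Longrightarrow> 0 \<le> f x"
  shows "0 \<le> (LINT x:S|N. f x)"
  unfolding set_lebesgue_integral_def using assms
  by (intro integral_nonneg_AE) (simp add: indicator_def)

lemma set_integrable_inner:
  fixes g h :: "'b \<Rightarrow> 'k::{real_inner, second_countable_topology}"
  assumes [measurable]: "g \<in> borel_measurable N" "h \<in> borel_measurable N" "S \<in> sets N"
    and "set_integrable N S (\<lambda>s. (norm (g s))\<^sup>2)" "set_integrable N S (\<lambda>s. (norm (h s))\<^sup>2)"
  shows "set_integrable N S (\<lambda>s. inner (g s) (h s))"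
proof (rule set_integrable_bound)
  show "set_integrable N S (\<lambda>s. 1/2 * (norm (g s))\<^sup>2 + 1/2 * (norm (h s))\<^sup>2)"
    using assms by (intro set_integral_add) auto
  show "set_borel_measurable N S (\<lambda>s. inner (g s) (h s))"
    unfolding set_borel_measurable_def by measurable
  show "AE s in N. s \<in> S \<longrightarrow> norm (inner (g s) (h s)) \<le> norm (1/2 * (norm (g s))\<^sup>2 + 1/2 * (norm (h s))\<^sup>2)"
  proof (intro AE_I2 impI)
    fix s
    show "norm (inner (g s) (h s)) \<le> norm (1/2 * (norm (g s))\<^sup>2 + 1/2 * (norm (h s))\<^sup>2)"
      using abs_inner_le_scaled_squares[of 1 "g s" "h s"] by simp
  qed
qed

lemma set_integrable_norm_diff_power2:
  fixes g h :: "'b \<Rightarrow> 'k::{real_normed_vector, second_countable_topology}"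
  assumes [measurable]: "g \<in> borel_measurable N" "h \<in> borel_measurable N" "S \<in> sets N"
    and "set_integrable N S (\<lambda>s. (norm (g s))\<^sup>2)" "set_integrable N S (\<lambda>s. (norm (h s))\<^sup>2)"
  shows "set_integrable N S (\<lambda>s. (norm (g s - h s))\<^sup>2)"
proof (rule set_integrable_bound)
  show "set_integrable N S (\<lambda>s. 2 * (norm (g s))\<^sup>2 + 2 * (norm (h s))\<^sup>2)"
    using assms by (intro set_integral_add) auto
  show "set_borel_measurable N S (\<lambda>s. (norm (g s - h s))\<^sup>2)"
    unfolding set_borel_measurable_def by measurable
  show "AE s in N. s \<in> S \<longrightarrow> norm ((norm (g s - h s))\<^sup>2) \<le> norm (2 * (norm (g s))\<^sup>2 + 2 * (norm (h s))\<^sup>2)"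
    using norm_diff_power2_le by (intro AE_I2) auto
qed

lemma set_integral_nonneg_mono_set:
  fixes f :: "'b \<Rightarrow> real"
  assumes "set_integrable N B f" "A \<in> sets N" "A \<subseteq> B" "\<And>x. x \<in> B \<Longrightarrow> 0 \<le> f x"
  shows "(LINT x:A|N. f x) \<le> (LINT x:B|N. f x)"
  using assms set_integrable_subset[OF assms(1,2,3)]
  unfolding set_integrable_def set_lebesgue_integral_def
  by (intro integral_mono) (auto simp: indicator_def)

lemma abs_set_integral_inner_le:
  fixes g h :: "'b \<Rightarrow> 'k::{real_inner, second_countable_topology}"
  assumes [measurable]: "g \<in> borel_measurable N" "h \<in> borel_measurable N" "S \<in> sets N"
    and g: "set_integrable N S (\<lambda>s. (norm (g s))\<^sup>2)" and h: "set_integrable N S (\<lambda>s. (norm (h s))\<^sup>2)"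
    and "0 < c"
  shows "\<bar>LINT s:S|N. inner (g s) (h s)\<bar>
    \<le> c/2 * (LINT s:S|N. (norm (g s))\<^sup>2) + 1/(2*c) * (LINT s:S|N. (norm (h s))\<^sup>2)"
proof -
  have "\<bar>LINT s:S|N. inner (g s) (h s)\<bar> \<le> (LINT s:S|N. \<bar>inner (g s) (h s)\<bar>)"
    using set_integral_norm_bound[OF set_integrable_inner[OF assms(1-5)]] by simp
  also have "\<dots> \<le> (LINT s:S|N. c/2 * (norm (g s))\<^sup>2 + 1/(2*c) * (norm (h s))\<^sup>2)"
    using set_integrable_inner[OF assms(1-5)] g h abs_inner_le_scaled_squares[OF \<open>0 < c\<close>]
    by (intro set_integral_mono) (auto intro: set_integrable_abs)
  also have "\<dots> = c/2 * (LINT s:S|N. (norm (g s))\<^sup>2) + 1/(2*c) * (LINT s:S|N. (norm (h s))\<^sup>2)"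
    using g h by simp
  finally show ?thesis .
qed

lemma set_integral_inner_tendsto_zero:
  fixes g :: "'b \<Rightarrow> 'k::{real_inner, second_countable_topology}" and h :: "nat \<Rightarrow> 'b \<Rightarrow> 'k"
  assumes [measurable]: "g \<in> borel_measurable N" "\<And>n. h n \<in> borel_measurable N" "S \<in> sets N"
    and g: "set_integrable N S (\<lambda>s. (norm (g s))\<^sup>2)"
    and h: "\<And>n. set_integrable N S (\<lambda>s. (norm (h n s))\<^sup>2)"
    and h_tendsto: "(\<lambda>n. LINT s:S|N. (norm (h n s))\<^sup>2) \<longlonglongrightarrow> 0"
  shows "(\<lambda>n. LINT s:S|N. inner (g s) (h n s)) \<longlonglongrightarrow> 0"
proof (rule LIMSEQ_I)
  fix r :: real
  assume "0 < r"
  define A where "A = (LINT s:S|N. (norm (g s))\<^sup>2)"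
  have "0 \<le> A"
    unfolding A_def by (intro set_integral_nonneg) simp
  define c where "c = r / (A + 1)"
  have "0 < c" and cA: "c/2 * A < r/2"
    using \<open>0 < r\<close> \<open>0 \<le> A\<close> by (auto simp: c_def field_simps)
  obtain n0 where n0: "\<And>n. n0 \<le> n \<Longrightarrow> (LINT s:S|N. (norm (h n s))\<^sup>2) < c * r"
    using order_tendstoD(2)[OF h_tendsto, of "c * r"] \<open>0 < c\<close> \<open>0 < r\<close>
    by (auto simp: eventually_sequentially)
  have "norm (LINT s:S|N. inner (g s) (h n s)) < r" if "n0 \<le> n" for n
  proof -
    have "1/(2*c) * (LINT s:S|N. (norm (h n s))\<^sup>2) < 1/(2*c) * (c * r)"
      using n0[OF that] \<open>0 < c\<close> by (intro mult_strict_left_mono) auto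
    then have "1/(2*c) * (LINT s:S|N. (norm (h n s))\<^sup>2) < r/2"
      using \<open>0 < c\<close> by simp
    then show ?thesis
      using abs_set_integral_inner_le[OF assms(1,2,3) g h \<open>0 < c\<close>, of n] cA
      unfolding A_def by simp
  qed
  then show "\<exists>n0. \<forall>n\<ge>n0. norm ((LINT s:S|N. inner (g s) (h n s)) - 0) < r"
    by auto
qed

lemma set_integral_norm_power2_bounded:
  fixes h :: "nat \<Rightarrow> 'b \<Rightarrow> 'k::{real_normed_vector, second_countable_topology}"
  assumes [measurable]: "\<And>n. h n \<in> borel_measurable N" "f \<in> borel_measurable N" "S \<in> sets N"
    and h: "\<And>n. set_integrable N S (\<lambda>s. (norm (h n s))\<^sup>2)"
    and f: "set_integrable N S (\<lambda>s. (norm (f s))\<^sup>2)"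
    and h_tendsto: "(\<lambda>n. LINT s:S|N. (norm (h n s - f s))\<^sup>2) \<longlonglongrightarrow> 0"
  obtains K where "\<And>n. (LINT s:S|N. (norm (h n s))\<^sup>2) \<le> K"
proof -
  obtain B where B: "\<And>n. norm (LINT s:S|N. (norm (h n s - f s))\<^sup>2) \<le> B"
    using convergent_imp_Bseq[of "\<lambda>n. LINT s:S|N. (norm (h n s - f s))\<^sup>2"] h_tendsto
    by (auto simp: convergent_def Bseq_def)
  have "(LINT s:S|N. (norm (h n s))\<^sup>2) \<le> 2 * B + 2 * (LINT s:S|N. (norm (f s))\<^sup>2)" for n
  proof -
    have hf: "set_integrable N S (\<lambda>s. (norm (h n s - f s))\<^sup>2)"
      by (rule set_integrable_norm_diff_power2) (use h f in auto)
    have "(LINT s:S|N. (norm (h n s))\<^sup>2)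
        \<le> (LINT s:S|N. 2 * (norm (h n s - f s))\<^sup>2 + 2 * (norm (f s))\<^sup>2)"
      using h hf f norm_diff_power2_le[of "h n s - f s" "- f s" for s]
      by (intro set_integral_mono) auto
    also have "\<dots> \<le> 2 * B + 2 * (LINT s:S|N. (norm (f s))\<^sup>2)"
      using hf f B[of n] by simp
    finally show ?thesis .
  qed
  then show ?thesis by (rule that)
qed

lemma frakC_le_half_norm_power2: "frakC \<zeta> Y s x \<le> 1/2 * (norm (Y s))\<^sup>2"
proof -
  have "(norm (\<zeta> x - Y s))\<^sup>2 = (norm (\<zeta> x))\<^sup>2 - 2 * inner (\<zeta> x) (Y s) + (norm (Y s))\<^sup>2"
    by (simp add: power2_norm_eq_inner inner_diff_left inner_diff_right inner_commute)
  then show ?thesis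
    using zero_le_power2[of "norm (\<zeta> x - Y s)"] unfolding frakC_def by simp
qed

text \<open>If the integrand is not integrable, the integral is \<open>0\<close> by convention, and the bound holds trivially.\<close>
lemma set_integral_frakC_le:
  assumes Y: "set_integrable N S' (\<lambda>s. (norm (Y s))\<^sup>2)" and "S \<in> sets N" "S \<subseteq> S'"
  shows "(LINT s:S|N. frakC \<zeta> Y s (x s)) \<le> 1/2 * (LINT s:S'|N. (norm (Y s))\<^sup>2)"
proof (cases "set_integrable N S (\<lambda>s. frakC \<zeta> Y s (x s))")
  case True
  have "(LINT s:S|N. frakC \<zeta> Y s (x s)) \<le> (LINT s:S|N. 1/2 * (norm (Y s))\<^sup>2)"
    using True set_integrable_subset[OF Y assms(2,3)] frakC_le_half_norm_power2
    by (intro set_integral_mono) auto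
  also have "\<dots> \<le> (LINT s:S'|N. 1/2 * (norm (Y s))\<^sup>2)"
    using Y assms(2,3) by (intro set_integral_nonneg_mono_set) auto
  finally show ?thesis by simp
next
  case False
  then have "(LINT s:S|N. frakC \<zeta> Y s (x s)) = 0"
    unfolding set_integrable_def set_lebesgue_integral_def by (rule not_integrable_integral_eq)
  moreover have "0 \<le> (LINT s:S'|N. (norm (Y s))\<^sup>2)"
    by (intro set_integral_nonneg) simp
  ultimately show ?thesis by simp
qed

lemma set_integral_frakC_tendsto:
  fixes \<zeta> :: "'h \<Rightarrow> 'k::{real_inner, second_countable_topology}"
  assumes [measurable]: "(\<lambda>s. \<zeta> (x s)) \<in> borel_measurable N"
    "Y \<in> borel_measurable N" "\<And>n. Yn n \<in> borel_measurable N" "S \<in> sets N" "S' \<in> sets N"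
    and "S \<subseteq> S'"
    and x: "set_integrable N S' (\<lambda>s. (norm (\<zeta> (x s)))\<^sup>2)"
    and Y: "set_integrable N S' (\<lambda>s. (norm (Y s))\<^sup>2)"
    and Yn: "\<And>n. set_integrable N S' (\<lambda>s. (norm (Yn n s))\<^sup>2)"
    and Yn_tendsto: "(\<lambda>n. LINT s:S'|N. (norm (Yn n s - Y s))\<^sup>2) \<longlonglongrightarrow> 0"
  shows "(\<lambda>n. LINT s:S|N. frakC \<zeta> (Yn n) s (x s)) \<longlonglongrightarrow> (LINT s:S|N. frakC \<zeta> Y s (x s))"
proof -
  have on_S: "set_integrable N S f" if "set_integrable N S' f" for f :: "real \<Rightarrow> real"
    using set_integrable_subset[OF that \<open>S \<in> sets N\<close> \<open>S \<subseteq> S'\<close>] .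
  have diff: "set_integrable N S' (\<lambda>s. (norm (Yn n s - Y s))\<^sup>2)" for n
    using set_integrable_norm_diff_power2[OF _ _ _ Yn Y] by simp
  have "(LINT s:S|N. frakC \<zeta> (Yn n) s (x s)) - (LINT s:S|N. frakC \<zeta> Y s (x s))
      = (LINT s:S|N. inner (\<zeta> (x s)) (Yn n s - Y s))" for n
    using on_S[OF set_integrable_inner[OF _ _ _ x Yn]] on_S[OF set_integrable_inner[OF _ _ _ x Y]]
      on_S[OF x]
    by (simp add: frakC_def set_integral_diff(2) inner_diff_right)
  moreover have "(\<lambda>n. LINT s:S|N. inner (\<zeta> (x s)) (Yn n s - Y s)) \<longlonglongrightarrow> 0"
  proof (rule set_integral_inner_tendsto_zero)
    show "(\<lambda>n. LINT s:S|N. (norm (Yn n s - Y s))\<^sup>2) \<longlonglongrightarrow> 0"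
    proof (rule tendsto_sandwich[OF _ _ tendsto_const Yn_tendsto])
      show "\<forall>\<^sub>F n in sequentially. 0 \<le> (LINT s:S|N. (norm (Yn n s - Y s))\<^sup>2)"
        by (intro always_eventually allI set_integral_nonneg) simp
      show "\<forall>\<^sub>F n in sequentially. (LINT s:S|N. (norm (Yn n s - Y s))\<^sup>2) \<le> (LINT s:S'|N. (norm (Yn n s - Y s))\<^sup>2)"
        using diff \<open>S \<subseteq> S'\<close> by (intro always_eventually allI set_integral_nonneg_mono_set) auto
    qed
  qed (use on_S[OF x] on_S[OF diff] in auto)
  ultimately show ?thesis
    by (simp add: LIM_zero_cancel)
qed

lemma tv_norm_tendsto_zero:
  fixes \<mu> :: "nat \<Rightarrow> 'h::topological_space set \<Rightarrow> real"
  assumes bound: "\<And>n P. finite P \<Longrightarrow> P \<subseteq> sets borel \<Longrightarrow> disjoint P \<Longrightarrow> (\<Sum>A\<in>P. \<bar>\<mu> n A\<bar>) \<le> b n"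
    and "b \<longlonglongrightarrow> 0"
  shows "(\<lambda>n. tv_norm (\<mu> n)) \<longlonglongrightarrow> 0"
proof (rule tendsto_sandwich[OF _ _ tendsto_const \<open>b \<longlonglongrightarrow> 0\<close>])
  let ?P = "{P. finite P \<and> P \<subseteq> sets (borel :: 'h measure) \<and> disjoint P}"
  have empty: "{} \<in> ?P" by auto
  have "bdd_above ((\<lambda>P. \<Sum>A\<in>P. \<bar>\<mu> n A\<bar>) ` ?P)" for n
    using bound by (intro bdd_aboveI[where M="b n"]) auto
  then have "(\<Sum>A\<in>{}. \<bar>\<mu> n A\<bar>) \<le> tv_norm (\<mu> n)" for n
    unfolding tv_norm_def by (rule cSUP_upper[OF empty])
  then show "\<forall>\<^sub>F n in sequentially. 0 \<le> tv_norm (\<mu> n)" by simp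
  have "tv_norm (\<mu> n) \<le> b n" for n
    unfolding tv_norm_def using empty bound by (intro cSUP_least) auto
  then show "\<forall>\<^sub>F n in sequentially. tv_norm (\<mu> n) \<le> b n" by simp
qed

definition weighted_law :: "'a measure \<Rightarrow> ('a \<Rightarrow> 'h) \<Rightarrow> ('a \<Rightarrow> real) \<Rightarrow> 'h set \<Rightarrow> real" where
  "weighted_law M Z f A = (\<integral>\<omega>. indicator A (Z \<omega>) * f \<omega> \<partial>M)"

lemma sum_indicator_disjoint_le_1:
  assumes "finite P" "disjoint P"
  shows "(\<Sum>A\<in>P. indicator A x) \<le> (1::real)"
proof -
  have "disjoint_family_on id P"
    using assms(2) by (auto simp: disjoint_def disjoint_family_on_def)
  then have "(indicator (\<Union>(id ` P)) x :: real) = (\<Sum>A\<in>P. indicator (id A) x)"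
    by (rule indicator_UN_disjoint[OF assms(1)])
  then have "(\<Sum>A\<in>P. indicator A x) = (indicator (\<Union>P) x :: real)"
    by (simp only: id_apply image_id)
  then show ?thesis by (simp only: indicator_le_1)
qed

lemma integrable_indicator_comp_mult:
  fixes f :: "'a \<Rightarrow> real"
  assumes [measurable]: "Z \<in> borel_measurable M" "A \<in> sets borel" and f: "integrable M f"
  shows "integrable M (\<lambda>\<omega>. indicator A (Z \<omega>) * f \<omega>)"
proof (rule Bochner_Integration.integrable_bound[OF f])
  have [measurable]: "f \<in> borel_measurable M" using f by simp
  show "(\<lambda>\<omega>. indicator A (Z \<omega>) * f \<omega>) \<in> borel_measurable M" by measurable
qed (auto simp: indicator_def)

lemma weighted_law_diff:
  assumes "Z \<in> borel_measurable M" "A \<in> sets borel" "integrable M f" "integrable M g"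
  shows "weighted_law M Z f A - weighted_law M Z g A = weighted_law M Z (\<lambda>\<omega>. f \<omega> - g \<omega>) A"
  using integrable_indicator_comp_mult[OF assms(1,2,3)] integrable_indicator_comp_mult[OF assms(1,2,4)]
  by (simp add: weighted_law_def right_diff_distrib)

lemma weighted_law_UNIV: "weighted_law M Z f UNIV = (\<integral>\<omega>. f \<omega> \<partial>M)"
  by (simp add: weighted_law_def)

lemma sum_abs_weighted_law_le:
  assumes [measurable]: "Z \<in> borel_measurable M" and f: "integrable M f"
    and P: "finite P" "P \<subseteq> sets borel" "disjoint P"
  shows "(\<Sum>A\<in>P. \<bar>weighted_law M Z f A\<bar>) \<le> (\<integral>\<omega>. \<bar>f \<omega>\<bar> \<partial>M)"
proof -
  have int: "integrable M (\<lambda>\<omega>. indicator A (Z \<omega>) * \<bar>f \<omega>\<bar>)" if "A \<in> P" for A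
    using that P f by (intro integrable_indicator_comp_mult) auto
  have "(\<Sum>A\<in>P. \<bar>weighted_law M Z f A\<bar>) \<le> (\<Sum>A\<in>P. \<integral>\<omega>. indicator A (Z \<omega>) * \<bar>f \<omega>\<bar> \<partial>M)"
  proof (rule sum_mono)
    fix A
    have "\<bar>weighted_law M Z f A\<bar> \<le> (\<integral>\<omega>. \<bar>indicator A (Z \<omega>) * f \<omega>\<bar> \<partial>M)"
      unfolding weighted_law_def by (rule integral_abs_bound)
    then show "\<bar>weighted_law M Z f A\<bar> \<le> (\<integral>\<omega>. indicator A (Z \<omega>) * \<bar>f \<omega>\<bar> \<partial>M)"
      by (simp add: abs_mult)
  qed
  also have "\<dots> = (\<integral>\<omega>. (\<Sum>A\<in>P. indicator A (Z \<omega>)) * \<bar>f \<omega>\<bar> \<partial>M)"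
    using int by (simp add: sum_distrib_right)
  also have "\<dots> \<le> (\<integral>\<omega>. \<bar>f \<omega>\<bar> \<partial>M)"
  proof (rule integral_mono)
    show "integrable M (\<lambda>\<omega>. (\<Sum>A\<in>P. indicator A (Z \<omega>)) * \<bar>f \<omega>\<bar>)"
      using int by (simp add: sum_distrib_right)
    show "(\<Sum>A\<in>P. indicator A (Z \<omega>)) * \<bar>f \<omega>\<bar> \<le> \<bar>f \<omega>\<bar>" for \<omega>
      using sum_indicator_disjoint_le_1[OF P(1,3)] by (simp add: mult_left_le_one_le sum_nonneg)
  qed (use f in simp)
  finally show ?thesis .
qed

lemma sum_abs_weighted_law_diff_le:
  assumes Z: "Z \<in> borel_measurable M" and f: "integrable M f" and g: "integrable M g"
    and P: "finite P" "P \<subseteq> sets borel" "disjoint P"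
  shows "(\<Sum>A\<in>P. \<bar>weighted_law M Z f A - weighted_law M Z g A\<bar>) \<le> (\<integral>\<omega>. \<bar>f \<omega> - g \<omega>\<bar> \<partial>M)"
proof -
  have "(\<Sum>A\<in>P. \<bar>weighted_law M Z f A - weighted_law M Z g A\<bar>)
      = (\<Sum>A\<in>P. \<bar>weighted_law M Z (\<lambda>\<omega>. f \<omega> - g \<omega>) A\<bar>)"
    using P weighted_law_diff[OF Z _ f g] by (intro sum.cong) auto
  also have "\<dots> \<le> (\<integral>\<omega>. \<bar>f \<omega> - g \<omega>\<bar> \<partial>M)"
    using f g by (intro sum_abs_weighted_law_le[OF Z _ P]) simp
  finally show ?thesis .
qed

lemma tv_norm_weighted_law_diff_tendsto:
  assumes "Z \<in> borel_measurable M" "\<And>n. integrable M (f n)" "integrable M g"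
    and "(\<lambda>n. \<integral>\<omega>. \<bar>f n \<omega> - g \<omega>\<bar> \<partial>M) \<longlonglongrightarrow> 0"
  shows "(\<lambda>n. tv_norm (\<lambda>A. weighted_law M Z (f n) A - weighted_law M Z g A)) \<longlonglongrightarrow> 0"
  by (rule tv_norm_tendsto_zero[OF sum_abs_weighted_law_diff_le assms(4)]) (use assms in auto)

lemma tv_norm_normalized_weighted_law_diff_tendsto:
  assumes Z: "Z \<in> borel_measurable M" and f: "\<And>n. integrable M (f n)" and g: "integrable M g"
    and L1: "(\<lambda>n. \<integral>\<omega>. \<bar>f n \<omega> - g \<omega>\<bar> \<partial>M) \<longlonglongrightarrow> 0"
    and "(\<integral>\<omega>. g \<omega> \<partial>M) \<noteq> 0"
  shows "(\<lambda>n. tv_norm (\<lambda>A. weighted_law M Z (f n) A / weighted_law M Z (f n) UNIV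
                          - weighted_law M Z g A / weighted_law M Z g UNIV)) \<longlonglongrightarrow> 0"
proof -
  define \<delta> where "\<delta> = (\<lambda>n. \<integral>\<omega>. \<bar>f n \<omega> - g \<omega>\<bar> \<partial>M)"
  define z where "z n = (\<integral>\<omega>. f n \<omega> \<partial>M)" for n
  define z0 where "z0 = (\<integral>\<omega>. g \<omega> \<partial>M)"
  define b where "b n = \<delta> n / \<bar>z n\<bar> + (\<integral>\<omega>. \<bar>g \<omega>\<bar> \<partial>M) * \<bar>1 / z n - 1 / z0\<bar>" for n
  have "(\<lambda>n. z n - z0) \<longlonglongrightarrow> 0"
  proof (rule Lim_null_comparison)
    show "\<forall>\<^sub>F n in sequentially. norm (z n - z0) \<le> \<delta> n"
      using f g unfolding z_def z0_def \<delta>_def by (simp flip: Bochner_Integration.integral_diff)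
    show "\<delta> \<longlonglongrightarrow> 0"
      unfolding \<delta>_def by (rule L1)
  qed
  then have "z \<longlonglongrightarrow> z0"
    by (simp add: LIM_zero_iff)
  then have "b \<longlonglongrightarrow> 0 / \<bar>z0\<bar> + (\<integral>\<omega>. \<bar>g \<omega>\<bar> \<partial>M) * \<bar>1 / z0 - 1 / z0\<bar>"
    unfolding b_def \<delta>_def using L1 assms(5) unfolding z0_def
    by (intro tendsto_add tendsto_mult tendsto_const tendsto_divide tendsto_rabs tendsto_diff) auto
  then have "b \<longlonglongrightarrow> 0"
    by simp
  moreover have bound: "(\<Sum>A\<in>P. \<bar>weighted_law M Z (f n) A / z n - weighted_law M Z g A / z0\<bar>) \<le> b n"
    if P: "finite P" "P \<subseteq> sets borel" "disjoint P" for n P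
  proof -
    have pointwise: "\<bar>x / z n - y / z0\<bar> \<le> \<bar>x - y\<bar> / \<bar>z n\<bar> + \<bar>y\<bar> * \<bar>1 / z n - 1 / z0\<bar>" for x y
    proof -
      have "x / z n - y / z0 = (x - y) / z n + y * (1 / z n - 1 / z0)"
        by (simp add: divide_inverse algebra_simps)
      also have "\<bar>\<dots>\<bar> \<le> \<bar>(x - y) / z n\<bar> + \<bar>y * (1 / z n - 1 / z0)\<bar>"
        by (rule abs_triangle_ineq)
      finally show ?thesis
        by (simp add: abs_mult)
    qed
    have "(\<Sum>A\<in>P. \<bar>weighted_law M Z (f n) A / z n - weighted_law M Z g A / z0\<bar>)
        \<le> (\<Sum>A\<in>P. \<bar>weighted_law M Z (f n) A - weighted_law M Z g A\<bar> / \<bar>z n\<bar>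
               + \<bar>weighted_law M Z g A\<bar> * \<bar>1 / z n - 1 / z0\<bar>)"
      by (rule sum_mono) (rule pointwise)
    also have "\<dots> = (\<Sum>A\<in>P. \<bar>weighted_law M Z (f n) A - weighted_law M Z g A\<bar>) / \<bar>z n\<bar>
          + (\<Sum>A\<in>P. \<bar>weighted_law M Z g A\<bar>) * \<bar>1 / z n - 1 / z0\<bar>"
      by (simp add: sum.distrib sum_divide_distrib sum_distrib_right)
    also have "\<dots> \<le> b n"
      unfolding b_def \<delta>_def
      using sum_abs_weighted_law_diff_le[OF Z f g P] sum_abs_weighted_law_le[OF Z g P]
      by (intro add_mono mult_right_mono divide_right_mono) auto
    finally show ?thesis .
  qed
  ultimately show ?thesis
    using tv_norm_tendsto_zero[of "\<lambda>n A. weighted_law M Z (f n) A / z n - weighted_law M Z g A / z0" b]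
    by (simp add: weighted_law_UNIV z_def z0_def)
qed

definition ks_weight :: "(real \<Rightarrow> 'a \<Rightarrow> 'h) \<Rightarrow> ('h \<Rightarrow> 'k::real_inner) \<Rightarrow> (real \<Rightarrow> 'k) \<Rightarrow> real \<Rightarrow> 'a \<Rightarrow> real"
  where "ks_weight X \<zeta> Y t \<omega> = exp (LINT s:{0..t}|lborel. frakC \<zeta> Y s (X s \<omega>))"

lemma rho_eq_weighted_law: "rho M X \<zeta> Y t = weighted_law M (X t) (ks_weight X \<zeta> Y t)"
  by (simp add: fun_eq_iff rho_def weighted_law_def ks_weight_def)

lemma pi_filter_eq_weighted_law:
  "pi_filter M X \<zeta> Y t B
    = weighted_law M (X t) (ks_weight X \<zeta> Y t) B / weighted_law M (X t) (ks_weight X \<zeta> Y t) UNIV"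
  by (simp add: pi_filter_def rho_eq_weighted_law)

lemma ks_weight_pos: "0 < ks_weight X \<zeta> Y t \<omega>"
  by (simp add: ks_weight_def)

lemma ks_weight_le:
  assumes "t \<in> {0..T}" "set_integrable lborel {0..T} (\<lambda>s. (norm (Y s))\<^sup>2)"
  shows "ks_weight X \<zeta> Y t \<omega> \<le> exp (1/2 * (LINT s:{0..T}|lborel. (norm (Y s))\<^sup>2))"
  using set_integral_frakC_le[OF assms(2), of "{0..t}"] assms(1) by (simp add: ks_weight_def)

lemma measurable_clamped_process:
  fixes a b :: real
  assumes X: "(\<lambda>(s, \<omega>). X s \<omega>) \<in> measurable (restrict_space lborel {a..b} \<Otimes>\<^sub>M M) N" and "a \<le> b"
  shows "(\<lambda>(\<omega>, s). X (max a (min b s)) \<omega>) \<in> measurable (M \<Otimes>\<^sub>M lborel) N"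
proof -
  have "(\<lambda>(\<omega>, s). max a (min b s)) \<in> measurable (M \<Otimes>\<^sub>M lborel) (restrict_space lborel {a..b})"
  proof (rule measurable_restrict_space2)
    show "(\<lambda>(\<omega>, s). max a (min b s)) \<in> space (M \<Otimes>\<^sub>M lborel) \<rightarrow> {a..b}"
      using \<open>a \<le> b\<close> by auto
  qed measurable
  then have "(\<lambda>(\<omega>, s). (max a (min b s), \<omega>)) \<in> measurable (M \<Otimes>\<^sub>M lborel) (restrict_space lborel {a..b} \<Otimes>\<^sub>M M)"
    by (auto intro!: measurable_Pair simp: split_beta')
  from measurable_comp[OF this X] show ?thesis
    by (simp add: o_def split_beta')
qed

lemma borel_measurable_ks_weight:
  fixes \<zeta> :: "'h::topological_space \<Rightarrow> 'k::{real_inner, second_countable_topology}"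
  assumes t: "t \<in> {0..T}"
    and X: "(\<lambda>(s, \<omega>). X s \<omega>) \<in> borel_measurable (restrict_space lborel {0..T} \<Otimes>\<^sub>M M)"
    and [measurable]: "\<zeta> \<in> borel_measurable borel" "Y \<in> borel_measurable lborel"
  shows "ks_weight X \<zeta> Y t \<in> borel_measurable M"
proof -
  have [measurable]: "(\<lambda>(\<omega>, s). X (max 0 (min T s)) \<omega>) \<in> borel_measurable (M \<Otimes>\<^sub>M lborel)"
    using t by (intro measurable_clamped_process[OF X]) auto
  have "(\<lambda>(\<omega>, s). indicator {0..t} s *\<^sub>R frakC \<zeta> Y s (X (max 0 (min T s)) \<omega>))
      \<in> borel_measurable (M \<Otimes>\<^sub>M lborel)"
    unfolding frakC_def by measurable
  moreover have "(\<lambda>(\<omega>, s). indicator {0..t} s *\<^sub>R frakC \<zeta> Y s (X (max 0 (min T s)) \<omega>))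
      = (\<lambda>(\<omega>, s). indicator {0..t} s *\<^sub>R frakC \<zeta> Y s (X s \<omega>))"
    using t by (auto simp: fun_eq_iff indicator_def)
  ultimately have "(\<lambda>(\<omega>, s). indicator {0..t} s *\<^sub>R frakC \<zeta> Y s (X s \<omega>)) \<in> borel_measurable (M \<Otimes>\<^sub>M lborel)"
    by simp
  from lborel.borel_measurable_lebesgue_integral[OF this] show ?thesis
    unfolding ks_weight_def set_lebesgue_integral_def by measurable
qed

lemma integrable_ks_weight:
  fixes \<zeta> :: "'h::topological_space \<Rightarrow> 'k::{real_inner, second_countable_topology}"
  assumes "finite_measure M" "t \<in> {0..T}"
    and "(\<lambda>(s, \<omega>). X s \<omega>) \<in> borel_measurable (restrict_space lborel {0..T} \<Otimes>\<^sub>M M)"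
    and "\<zeta> \<in> borel_measurable borel" "Y \<in> borel_measurable lborel"
    and "set_integrable lborel {0..T} (\<lambda>s. (norm (Y s))\<^sup>2)"
  shows "integrable M (ks_weight X \<zeta> Y t)"
proof (rule finite_measure.integrable_const_bound[OF assms(1)])
  show "AE \<omega> in M. norm (ks_weight X \<zeta> Y t \<omega>) \<le> exp (1/2 * (LINT s:{0..T}|lborel. (norm (Y s))\<^sup>2))"
  proof (rule AE_I2)
    fix \<omega>
    show "norm (ks_weight X \<zeta> Y t \<omega>) \<le> exp (1/2 * (LINT s:{0..T}|lborel. (norm (Y s))\<^sup>2))"
      using ks_weight_le[OF assms(2,6), of X \<zeta> \<omega>] ks_weight_pos[of X \<zeta> Y t \<omega>] by simp
  qed
qed (rule borel_measurable_ks_weight[OF assms(2-5)])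

lemma ks_weight_tendsto:
  fixes \<zeta> :: "'h::topological_space \<Rightarrow> 'k::{real_inner, second_countable_topology}"
  assumes t: "t \<in> {0..T}"
    and X: "(\<lambda>(s, \<omega>). X s \<omega>) \<in> borel_measurable (restrict_space lborel {0..T} \<Otimes>\<^sub>M M)"
    and [measurable]: "\<zeta> \<in> borel_measurable borel"
    and "\<omega> \<in> space M"
    and energy: "(\<integral>\<^sup>+ s\<in>{0..T}. ennreal ((norm (\<zeta> (X s \<omega>)))\<^sup>2) \<partial>lborel) < \<infinity>"
    and [measurable]: "Y \<in> borel_measurable lborel" "\<And>n. Yn n \<in> borel_measurable lborel"
    and Y: "set_integrable lborel {0..T} (\<lambda>s. (norm (Y s))\<^sup>2)"
    and Yn: "\<And>n. set_integrable lborel {0..T} (\<lambda>s. (norm (Yn n s))\<^sup>2)"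
    and Yn_tendsto: "(\<lambda>n. LINT s:{0..T}|lborel. (norm (Yn n s - Y s))\<^sup>2) \<longlonglongrightarrow> 0"
  shows "(\<lambda>n. ks_weight X \<zeta> (Yn n) t \<omega>) \<longlonglongrightarrow> ks_weight X \<zeta> Y t \<omega>"
proof -
  define x where "x = (\<lambda>s. X (max 0 (min T s)) \<omega>)"
  have x_eq: "x s = X s \<omega>" if "s \<in> {0..T}" for s
    using that by (simp add: x_def)
  have "0 \<le> T"
    using t by simp
  from measurable_Pair2[OF measurable_clamped_process[OF X this] \<open>\<omega> \<in> space M\<close>]
  have [measurable]: "x \<in> borel_measurable lborel"
    by (simp add: x_def)
  have "set_integrable lborel {0..T} (\<lambda>s. (norm (\<zeta> (x s)))\<^sup>2)"
    unfolding set_integrable_def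
  proof (rule integrableI_bounded)
    have "(\<integral>\<^sup>+ s. ennreal (norm (indicator {0..T} s *\<^sub>R (norm (\<zeta> (x s)))\<^sup>2)) \<partial>lborel)
        = (\<integral>\<^sup>+ s\<in>{0..T}. ennreal ((norm (\<zeta> (X s \<omega>)))\<^sup>2) \<partial>lborel)"
      by (intro nn_integral_cong) (simp add: indicator_def x_eq)
    with energy show "(\<integral>\<^sup>+ s. ennreal (norm (indicator {0..T} s *\<^sub>R (norm (\<zeta> (x s)))\<^sup>2)) \<partial>lborel) < \<infinity>"
      by simp
  qed measurable
  then have "(\<lambda>n. LINT s:{0..t}|lborel. frakC \<zeta> (Yn n) s (x s)) \<longlonglongrightarrow> (LINT s:{0..t}|lborel. frakC \<zeta> Y s (x s))"
    using t by (intro set_integral_frakC_tendsto[OF _ _ _ _ _ _ _ Y Yn Yn_tendsto]) auto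
  moreover have "(LINT s:{0..t}|lborel. frakC \<zeta> Y' s (x s)) = (LINT s:{0..t}|lborel. frakC \<zeta> Y' s (X s \<omega>))" for Y'
    using t by (intro set_lebesgue_integral_cong) (auto simp: x_eq)
  ultimately show ?thesis
    unfolding ks_weight_def by (intro tendsto_exp) simp
qed

lemma ks_weight_L1_tendsto:
  fixes \<zeta> :: "'h::topological_space \<Rightarrow> 'k::{real_inner, second_countable_topology}"
  assumes "finite_measure M" and t: "t \<in> {0..T}"
    and X: "(\<lambda>(s, \<omega>). X s \<omega>) \<in> borel_measurable (restrict_space lborel {0..T} \<Otimes>\<^sub>M M)"
    and [measurable]: "\<zeta> \<in> borel_measurable borel"
    and energy: "AE \<omega> in M. (\<integral>\<^sup>+ s\<in>{0..T}. ennreal ((norm (\<zeta> (X s \<omega>)))\<^sup>2) \<partial>lborel) < \<infinity>"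
    and [measurable]: "Y \<in> borel_measurable lborel" "\<And>n. Yn n \<in> borel_measurable lborel"
    and Y: "set_integrable lborel {0..T} (\<lambda>s. (norm (Y s))\<^sup>2)"
    and Yn: "\<And>n. set_integrable lborel {0..T} (\<lambda>s. (norm (Yn n s))\<^sup>2)"
    and Yn_tendsto: "(\<lambda>n. LINT s:{0..T}|lborel. (norm (Yn n s - Y s))\<^sup>2) \<longlonglongrightarrow> 0"
  shows "(\<lambda>n. \<integral>\<omega>. \<bar>ks_weight X \<zeta> (Yn n) t \<omega> - ks_weight X \<zeta> Y t \<omega>\<bar> \<partial>M) \<longlonglongrightarrow> 0"
proof -
  interpret finite_measure M by fact
  obtain K where K: "\<And>n. (LINT s:{0..T}|lborel. (norm (Yn n s))\<^sup>2) \<le> K"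
    using set_integral_norm_power2_bounded[OF _ _ _ Yn Y Yn_tendsto] by auto
  define C where "C = exp (1/2 * K) + exp (1/2 * (LINT s:{0..T}|lborel. (norm (Y s))\<^sup>2))"
  have bound: "\<bar>ks_weight X \<zeta> (Yn n) t \<omega> - ks_weight X \<zeta> Y t \<omega>\<bar> \<le> C" for n \<omega>
  proof -
    have "ks_weight X \<zeta> (Yn n) t \<omega> \<le> exp (1/2 * (LINT s:{0..T}|lborel. (norm (Yn n s))\<^sup>2))"
      by (rule ks_weight_le[OF t Yn])
    also have "\<dots> \<le> exp (1/2 * K)"
      using K[of n] by simp
    finally show ?thesis
      using ks_weight_le[OF t Y, of X \<zeta> \<omega>] ks_weight_pos[of X \<zeta> "Yn n" t \<omega>] ks_weight_pos[of X \<zeta> Y t \<omega>]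
      unfolding C_def by (simp add: abs_le_iff)
  qed
  have "(\<lambda>n. \<integral>\<omega>. \<bar>ks_weight X \<zeta> (Yn n) t \<omega> - ks_weight X \<zeta> Y t \<omega>\<bar> \<partial>M) \<longlonglongrightarrow> (\<integral>\<omega>. 0 \<partial>M)"
  proof (rule integral_dominated_convergence[where w="\<lambda>_. C"])
    show "AE \<omega> in M. (\<lambda>n. \<bar>ks_weight X \<zeta> (Yn n) t \<omega> - ks_weight X \<zeta> Y t \<omega>\<bar>) \<longlonglongrightarrow> 0"
      using energy AE_space
    proof eventually_elim
      case (elim \<omega>)
      then have "(\<lambda>n. ks_weight X \<zeta> (Yn n) t \<omega>) \<longlonglongrightarrow> ks_weight X \<zeta> Y t \<omega>"
        by (intro ks_weight_tendsto[OF t X _ _ _ _ _ Y Yn Yn_tendsto]) auto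
      then show ?case
        by (intro tendsto_rabs_zero LIM_zero)
    qed
    have [measurable]: "ks_weight X \<zeta> Y t \<in> borel_measurable M" "ks_weight X \<zeta> (Yn n) t \<in> borel_measurable M" for n
      by (intro borel_measurable_ks_weight[OF t X]; simp)+
    show "(\<lambda>\<omega>. \<bar>ks_weight X \<zeta> (Yn n) t \<omega> - ks_weight X \<zeta> Y t \<omega>\<bar>) \<in> borel_measurable M" for n
      by measurable
    show "AE \<omega> in M. norm \<bar>ks_weight X \<zeta> (Yn n) t \<omega> - ks_weight X \<zeta> Y t \<omega>\<bar> \<le> C" for n
      using bound by simp
  qed simp_all
  then show ?thesis
    by simp
qed

theorem mainTheorem14:
  fixes M :: "'a measure"
    and X :: "real \<Rightarrow> 'a \<Rightarrow> 'h::{real_inner, complete_space, second_countable_topology}"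
    and \<zeta> :: "'h \<Rightarrow> 'k::{real_inner, complete_space, second_countable_topology}"
    and T :: real
    and Yn :: "nat \<Rightarrow> real \<Rightarrow> 'k"
    and Y :: "real \<Rightarrow> 'k"
    and t :: real
  assumes "prob_space M"
    and "0 < T"
    and "\<And>s. s \<in> {0..T} \<Longrightarrow> X s \<in> borel_measurable M"
    and "\<And>\<omega>. \<omega> \<in> space M \<Longrightarrow> continuous_on {0..T} (\<lambda>s. X s \<omega>)"
    and "(\<lambda>(s, \<omega>). X s \<omega>) \<in> borel_measurable (restrict_space lborel {0..T} \<Otimes>\<^sub>M M)"
    and "\<zeta> \<in> borel_measurable borel"
    and "AE \<omega> in M. (\<integral>\<^sup>+ s\<in>{0..T}. ennreal ((norm (\<zeta> (X s \<omega>)))\<^sup>2) \<partial>lborel) < \<infinity>"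
    and "Y \<in> borel_measurable lborel"
    and "set_integrable lborel {0..T} (\<lambda>s. (norm (Y s))\<^sup>2)"
    and "\<And>n. Yn n \<in> borel_measurable lborel"
    and "\<And>n. set_integrable lborel {0..T} (\<lambda>s. (norm (Yn n s))\<^sup>2)"
    and "(\<lambda>n. LINT s:{0..T}|lborel. (norm (Yn n s - Y s))\<^sup>2) \<longlonglongrightarrow> 0"
    and "t \<in> {0..T}"
  shows "(\<lambda>n. tv_norm (\<lambda>B. pi_filter M X \<zeta> (Yn n) t B - pi_filter M X \<zeta> Y t B)) \<longlonglongrightarrow> 0
       \<and> (\<lambda>n. tv_norm (\<lambda>B. rho M X \<zeta> (Yn n) t B - rho M X \<zeta> Y t B)) \<longlonglongrightarrow> 0"
proof -
  interpret prob_space M by fact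
  let ?w = "\<lambda>Y'. ks_weight X \<zeta> Y' t"
  have integrable: "integrable M (?w (Yn n))" "integrable M (?w Y)" for n
    using assms(5,6,8-11,13) by (auto intro: integrable_ks_weight[OF finite_measure_axioms])
  have L1: "(\<lambda>n. \<integral>\<omega>. \<bar>?w (Yn n) \<omega> - ?w Y \<omega>\<bar> \<partial>M) \<longlonglongrightarrow> 0"
    using assms(5-13) by (intro ks_weight_L1_tendsto[OF finite_measure_axioms]) auto
  have "(\<integral>\<omega>. 0 \<partial>M) < (\<integral>\<omega>. ?w Y \<omega> \<partial>M)"
    by (rule integral_less_AE_space) (auto intro: integrable(2) AE_I2 ks_weight_pos simp: emeasure_space_1)
  then have "(\<integral>\<omega>. ?w Y \<omega> \<partial>M) \<noteq> 0"
    by simp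
  then show ?thesis
    unfolding pi_filter_eq_weighted_law rho_eq_weighted_law
    using assms(3,13) integrable L1
    by (auto intro!: tv_norm_normalized_weighted_law_diff_tendsto tv_norm_weighted_law_diff_tendsto)
qed

end
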